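(* Let $g(X)=X^r+\sum_{i=0}^{r-1}m_iX^i\in\mathbb{F}_2[X]$ have degree $r\ge 1$, and let $f\in\mathbb{F}_2[X]$ with $\deg f<r$ be the initial load of the Galois-mode LFSR with connection polynomial $g$. Let $(a_k)_{k\ge 0}$ be its output sequence, i.e. $a_k$ is the coefficient of $X^{r-1}$ in $X^kf \bmod g$. Then for every $k\ge 0$, \[ \deg\bigl(X^kf \bmod g\bigr)=r-1-\max\{j\ge 0: a_k=a_{k+1}=\dots=a_{k+j-1}=0\}, \] where the maximum is taken to be $0$ if $a_k=1$.
   Context: The Galois-mode LFSR of length $r$ with connection polynomial $g$ has states $(f_0,\dots,f_{r-1})\in\mathbb{F}_2^r$, identified with $f(X)=\sum_{i=0}^{r-1}f_iX^i$, and transition $(f_0,\dots,f_{r-1})\mapsto(m_0f_{r-1},f_0+m_1f_{r-1},\dots,f_{r-2}+m_{r-1}f_{r-1})$; the state after $k$ steps is $X^kf\bmod g$, and the output at step $k$ is the last coordinate $f_{r-1}$ of the current state. Conventions: $\deg(0)=-\infty$, and the maximum of an unbounded set is $+\infty$. *)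

theory Defs
  imports "HOL-Computational_Algebra.Polynomial" "HOL-Library.Z2" "HOL-Library.Extended_Real"
begin

definition pdeg :: "'a::zero poly \<Rightarrow> ereal" where
  "pdeg p = (if p = 0 then -\<infinity> else ereal (real (degree p)))"

definition lfsr_out :: "bit poly \<Rightarrow> bit poly \<Rightarrow> nat \<Rightarrow> bit" where
  "lfsr_out g f k = coeff ((monom 1 k * f) mod g) (degree g - 1)"

definition zero_run :: "(nat \<Rightarrow> bit) \<Rightarrow> nat \<Rightarrow> enat" where
  "zero_run a k = Sup (enat ` {j. \<forall>i<j. a (k + i) = 0})"

end

theory Submission
  imports Defs
begin

text \<open>Shifting the LFSR by \<open>k\<close> steps is the same as restarting it from the state
  \<open>X\<^sup>k f mod g\<close>. As long as \<open>X\<^sup>i s\<close> stays below degree \<open>r\<close> no reduction happens, so the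
  outputs read the coefficients of the state \<open>s\<close> from \<open>X\<^sup>r\<^sup>-\<^sup>1\<close> downwards: they are zero
  until the leading coefficient of \<open>s\<close> is reached after \<open>r - 1 - deg s\<close> steps. The
  zero state produces only zeros, matching \<open>deg 0 = -\<infinity>\<close>.\<close>

lemma zero_run_shift: "zero_run a k = zero_run (\<lambda>i. a (k + i)) 0"
  by (simp add: zero_run_def)

lemma zero_run_eq_infinity:
  assumes "\<And>i. a i = 0"
  shows "zero_run a 0 = \<infinity>"
proof -
  have "inj enat"
    by (simp add: inj_on_def)
  then have "infinite (range enat)"
    using finite_imageD infinite_UNIV_nat by blast
  then show ?thesis
    using assms by (simp add: zero_run_def Sup_enat_def)
qed

lemma zero_run_eq_enat:
  assumes "\<And>i. i < n \<Longrightarrow> a i = 0" and "a n \<noteq> 0"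
  shows "zero_run a 0 = enat n"
proof -
  have "j \<le> n" if "\<forall>i<j. a i = 0" for j
    using that assms(2) not_le by blast
  then have "{j. \<forall>i<j. a i = 0} = {..n}"
    using assms(1) by auto
  then show ?thesis
    unfolding zero_run_def by (auto intro!: antisym Sup_least Sup_upper)
qed

lemma lfsr_out_shift:
  "lfsr_out g f (k + i) = lfsr_out g ((monom 1 k * f) mod g) i"
proof -
  have "monom (1::bit) (k + i) * f = monom 1 i * (monom 1 k * f)"
    by (simp add: mult_monom add.commute flip: mult.assoc)
  then show ?thesis
    unfolding lfsr_out_def by (simp only: mod_mult_right_eq)
qed

lemma lfsr_out_zero_load: "lfsr_out g 0 i = 0"
  by (simp add: lfsr_out_def)

lemma lfsr_out_before_reduction:
  assumes "degree s + i < degree g"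
  shows "lfsr_out g s i = coeff s (degree g - 1 - i)"
proof -
  have "degree (monom 1 i * s) < degree g"
    using assms by (cases "s = 0") (simp_all add: degree_mult_eq degree_monom_eq)
  then have "(monom 1 i * s) mod g = monom 1 i * s"
    by (rule mod_poly_less)
  moreover have "\<not> degree g - 1 < i"
    using assms by simp
  ultimately show ?thesis
    by (simp add: lfsr_out_def coeff_monom_mult)
qed

lemma zero_run_lfsr_out:
  assumes "s \<noteq> 0" and "degree s < degree g"
  shows "zero_run (lfsr_out g s) 0 = enat (degree g - 1 - degree s)"
proof (rule zero_run_eq_enat)
  fix i assume "i < degree g - 1 - degree s"
  then show "lfsr_out g s i = 0"
    by (simp add: lfsr_out_before_reduction coeff_eq_0)
next
  show "lfsr_out g s (degree g - 1 - degree s) \<noteq> 0"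
    using assms by (simp add: lfsr_out_before_reduction)
qed

theorem theorem3:
  fixes g f :: "bit poly" and r k :: nat
  assumes "degree g = r" and "r \<ge> 1" and "lead_coeff g = 1"
    and "degree f < r"
  shows "pdeg ((monom 1 k * f) mod g)
         = ereal (real r - 1) - ereal_of_enat (zero_run (lfsr_out g f) k)"
proof -
  define s where "s = (monom 1 k * f) mod g"
  have run: "zero_run (lfsr_out g f) k = zero_run (lfsr_out g s) 0"
    by (subst zero_run_shift) (simp add: lfsr_out_shift s_def)
  show ?thesis
  proof (cases "s = 0")
    case True
    then show ?thesis
      by (simp add: run s_def [symmetric] pdeg_def lfsr_out_zero_load zero_run_eq_infinity)
  next
    case False
    have "g \<noteq> 0"
      using assms(1,2) by auto
    then have "degree s < r"
      using False degree_mod_less assms(1) unfolding s_def by blast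
    then show ?thesis
      using False assms(1)
      by (simp add: run s_def [symmetric] pdeg_def zero_run_lfsr_out of_nat_diff)
  qed
qed

end
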